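(* Let $M$ be a closed manifold and $\phi\in A^1(\mathbb{R}^2,M)$. Then any two dense orbits of $\phi$ are homeomorphic (indeed their isotropy groups coincide).
   Context: $A^1(\mathbb{R}^2,M)$ is the set of actions $\phi:\mathbb{R}^2\times M\to M$ of $\mathbb{R}^2$ on $M$ with $C^1$ infinitesimal generators. The orbit of $p$ is $\mathcal{O}_p=\{\phi(\omega,p):\omega\in\mathbb{R}^2\}$, equipped with the topology making $\omega\mapsto\phi(\omega,p)$ induce a homeomorphism $\mathbb{R}^2/G_p\to\mathcal{O}_p$, where $G_p=\{\omega\in\mathbb{R}^2:\phi(\omega,p)=p\}$ is the isotropy group of $p$. An orbit is dense if it is dense in $M$. *)

theory Defs
  imports "HOL-Analysis.Analysis"
begin

text \<open>A closed (compact, boundaryless) \<open>C\<^sup>1\<close> manifold, realised as an embedded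
  \<open>C\<^sup>1\<close> submanifold of a Euclidean space: every point has a neighbourhood in \<open>M\<close>
  which is the image of a relatively open subset of a linear subspace \<open>S\<close> under a
  \<open>C\<^sup>1\<close> immersion that is a homeomorphism onto that neighbourhood.\<close>

definition c1_submanifold :: "'a::euclidean_space set \<Rightarrow> bool" where
  "c1_submanifold M \<longleftrightarrow>
     (\<forall>p\<in>M. \<exists>(S::'a set) U V h g h'.
        subspace S \<and> open U \<and> p \<in> U \<and> V \<subseteq> S \<and> openin (top_of_set S) V \<and>
        homeomorphism V (M \<inter> U) h g \<and>
        (\<forall>x\<in>V. (h has_derivative blinfun_apply (h' x)) (at x within V) \<and>
                inj_on (blinfun_apply (h' x)) S) \<and>
        continuous_on V h')"

definition closed_manifold :: "'a::euclidean_space set \<Rightarrow> bool" where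
  "closed_manifold M \<longleftrightarrow> compact M \<and> c1_submanifold M"

definition c1_field_on :: "'a::euclidean_space set \<Rightarrow> ('a \<Rightarrow> 'a) \<Rightarrow> bool" where
  "c1_field_on M X \<longleftrightarrow>
     (\<exists>U X'. open U \<and> M \<subseteq> U \<and>
        (\<forall>x\<in>U. (X has_derivative blinfun_apply (X' x)) (at x)) \<and> continuous_on U X')"

definition R2_action :: "'a::euclidean_space set \<Rightarrow> (real \<times> real \<Rightarrow> 'a \<Rightarrow> 'a) \<Rightarrow> bool" where
  "R2_action M \<phi> \<longleftrightarrow>
     continuous_on (UNIV \<times> M) (\<lambda>(\<omega>, p). \<phi> \<omega> p) \<and>
     (\<forall>\<omega> p. p \<in> M \<longrightarrow> \<phi> \<omega> p \<in> M) \<and>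
     (\<forall>p\<in>M. \<phi> 0 p = p) \<and>
     (\<forall>\<omega> \<eta> p. p \<in> M \<longrightarrow> \<phi> (\<omega> + \<eta>) p = \<phi> \<omega> (\<phi> \<eta> p))"

definition A1_action :: "'a::euclidean_space set \<Rightarrow> (real \<times> real \<Rightarrow> 'a \<Rightarrow> 'a) \<Rightarrow> bool" where
  "A1_action M \<phi> \<longleftrightarrow> R2_action M \<phi> \<and>
     (\<exists>X Y. c1_field_on M X \<and> c1_field_on M Y \<and>
        (\<forall>p\<in>M. ((\<lambda>t. \<phi> (t, 0) p) has_vector_derivative X p) (at 0) \<and>
                ((\<lambda>t. \<phi> (0, t) p) has_vector_derivative Y p) (at 0)))"

definition orbit :: "(real \<times> real \<Rightarrow> 'a \<Rightarrow> 'a) \<Rightarrow> 'a \<Rightarrow> 'a set" where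
  "orbit \<phi> p = range (\<lambda>\<omega>. \<phi> \<omega> p)"

definition isotropy :: "(real \<times> real \<Rightarrow> 'a \<Rightarrow> 'a) \<Rightarrow> 'a \<Rightarrow> (real \<times> real) set" where
  "isotropy \<phi> p = {\<omega>. \<phi> \<omega> p = p}"

text \<open>The orbit topology: the quotient topology induced by \<open>\<omega> \<mapsto> \<phi> \<omega> p\<close>, i.e. the
  topology making \<open>\<real>\<^sup>2/G\<^sub>p \<rightarrow> \<O>\<^sub>p\<close> a homeomorphism.\<close>
definition orbit_topology :: "(real \<times> real \<Rightarrow> 'a \<Rightarrow> 'a) \<Rightarrow> 'a \<Rightarrow> 'a topology" where
  "orbit_topology \<phi> p =
     topology (\<lambda>U. U \<subseteq> orbit \<phi> p \<and> open {\<omega>. \<phi> \<omega> p \<in> U})"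

definition dense_orbit :: "'a::topological_space set \<Rightarrow> (real \<times> real \<Rightarrow> 'a \<Rightarrow> 'a) \<Rightarrow> 'a \<Rightarrow> bool" where
  "dense_orbit M \<phi> p \<longleftrightarrow> p \<in> M \<and> M \<subseteq> closure (orbit \<phi> p)"

end

theory Submission
  imports Defs
begin

text \<open>An element \<open>\<omega>\<close> of the isotropy group of \<open>p\<close> fixes, by commutativity of \<open>\<real>\<^sup>2\<close>, every
  point \<open>\<phi> \<eta> p\<close> of the orbit of \<open>p\<close>. Its fixed point set in \<open>M\<close> is closed, so if the orbit
  is dense in the closed set \<open>M\<close>, then \<open>\<omega>\<close> fixes all of \<open>M\<close>. Hence two dense orbits have
  the same isotropy group \<open>G\<close>, and both orbit topologies are quotient topologies of \<open>\<real>\<^sup>2\<close>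
  by the same equivalence relation (congruence modulo \<open>G\<close>), so
  \<open>\<phi> \<omega> p \<mapsto> \<phi> \<omega> q\<close> is a well-defined homeomorphism.\<close>

lemma istopology_orbit_topology:
  "istopology (\<lambda>U. U \<subseteq> orbit \<phi> p \<and> open {\<omega>. \<phi> \<omega> p \<in> U})"
proof -
  have "{\<omega>. \<phi> \<omega> p \<in> S \<inter> T} = {\<omega>. \<phi> \<omega> p \<in> S} \<inter> {\<omega>. \<phi> \<omega> p \<in> T}"
    and "{\<omega>. \<phi> \<omega> p \<in> \<Union>\<K>} = (\<Union>U\<in>\<K>. {\<omega>. \<phi> \<omega> p \<in> U})" for S T \<K>
    by auto
  then show ?thesis
    unfolding istopology_def by auto
qed

lemma openin_orbit_topology:
  "openin (orbit_topology \<phi> p) U \<longleftrightarrow> U \<subseteq> orbit \<phi> p \<and> open {\<omega>. \<phi> \<omega> p \<in> U}"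
  unfolding orbit_topology_def by (simp add: istopology_orbit_topology)

lemma topspace_orbit_topology [simp]: "topspace (orbit_topology \<phi> p) = orbit \<phi> p"
proof (rule subset_antisym)
  show "topspace (orbit_topology \<phi> p) \<subseteq> orbit \<phi> p"
    using openin_topspace[of "orbit_topology \<phi> p"] by (simp only: openin_orbit_topology)
  have "openin (orbit_topology \<phi> p) (orbit \<phi> p)"
    by (simp add: openin_orbit_topology orbit_def)
  then show "orbit \<phi> p \<subseteq> topspace (orbit_topology \<phi> p)"
    by (rule openin_subset)
qed

lemma continuous_map_orbit_topology:
  assumes "\<And>\<omega>. f (\<phi> \<omega> p) = \<psi> \<omega> q"
  shows "continuous_map (orbit_topology \<phi> p) (orbit_topology \<psi> q) f"
  unfolding continuous_map_def
proof (intro conjI allI impI)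
  show "f \<in> topspace (orbit_topology \<phi> p) \<rightarrow> topspace (orbit_topology \<psi> q)"
    using assms by (auto simp: orbit_def)
next
  fix U assume "openin (orbit_topology \<psi> q) U"
  moreover have "{\<omega>. \<phi> \<omega> p \<in> {x \<in> orbit \<phi> p. f x \<in> U}} = {\<omega>. \<psi> \<omega> q \<in> U}"
    using assms by (auto simp: orbit_def)
  ultimately show "openin (orbit_topology \<phi> p) {x \<in> topspace (orbit_topology \<phi> p). f x \<in> U}"
    by (simp add: openin_orbit_topology)
qed

lemma homeomorphic_orbit_topology:
  assumes "\<And>\<omega> \<eta>. \<phi> \<omega> p = \<phi> \<eta> p \<longleftrightarrow> \<psi> \<omega> q = \<psi> \<eta> q"
  shows "orbit_topology \<phi> p homeomorphic_space orbit_topology \<psi> q"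
proof -
  define f where "f x = \<psi> (SOME \<omega>. \<phi> \<omega> p = x) q" for x
  define g where "g y = \<phi> (SOME \<omega>. \<psi> \<omega> q = y) p" for y
  have f: "f (\<phi> \<omega> p) = \<psi> \<omega> q" for \<omega>
  proof -
    have "\<phi> (SOME \<eta>. \<phi> \<eta> p = \<phi> \<omega> p) p = \<phi> \<omega> p"
      by (rule someI) (rule refl)
    then show ?thesis
      unfolding f_def by (simp only: assms)
  qed
  have g: "g (\<psi> \<omega> q) = \<phi> \<omega> p" for \<omega>
  proof -
    have "\<psi> (SOME \<eta>. \<psi> \<eta> q = \<psi> \<omega> q) q = \<psi> \<omega> q"
      by (rule someI) (rule refl)
    then show ?thesis
      unfolding g_def by (simp only: assms)
  qed
  have "continuous_map (orbit_topology \<phi> p) (orbit_topology \<psi> q) f"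
    and "continuous_map (orbit_topology \<psi> q) (orbit_topology \<phi> p) g"
    by (rule continuous_map_orbit_topology, rule f, rule continuous_map_orbit_topology, rule g)
  then have "homeomorphic_maps (orbit_topology \<phi> p) (orbit_topology \<psi> q) f g"
    unfolding homeomorphic_maps_def using f g by (auto simp: orbit_def)
  then show ?thesis
    unfolding homeomorphic_space_def by blast
qed

lemma R2_action_eq_iff_diff_isotropy:
  assumes "R2_action M \<phi>" and "p \<in> M"
  shows "\<phi> \<omega> p = \<phi> \<eta> p \<longleftrightarrow> \<omega> - \<eta> \<in> isotropy \<phi> p"
proof -
  have act: "\<phi> (\<alpha> + \<beta>) p = \<phi> \<alpha> (\<phi> \<beta> p)" and "\<phi> 0 p = p" for \<alpha> \<beta>
    using assms unfolding R2_action_def by blast+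
  then have "\<phi> (- \<eta>) (\<phi> \<eta> p) = p"
    by (metis add.left_inverse)
  then show ?thesis
    unfolding isotropy_def using act[of "- \<eta>" \<omega>] act[of \<eta> "\<omega> - \<eta>"] by auto
qed

lemma closed_fixed_points:
  assumes "closed M" and "R2_action M \<phi>"
  shows "closed {x \<in> M. \<phi> \<omega> x = x}"
proof -
  have "continuous_on (UNIV \<times> M) (\<lambda>(\<omega>, x). \<phi> \<omega> x)"
    using assms(2) by (simp add: R2_action_def)
  then have "continuous_on M (\<lambda>x. (\<lambda>(\<omega>, x). \<phi> \<omega> x) (\<omega>, x))"
    by (rule continuous_on_compose2) (auto intro!: continuous_intros)
  then have "continuous_on M (\<phi> \<omega>)"
    by simp
  then have "closed {x \<in> M. \<phi> \<omega> x - x = 0}"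
    by (intro continuous_closed_preimage_constant continuous_intros assms(1))
  then show ?thesis
    by simp
qed

lemma isotropy_fixes_orbit:
  assumes "R2_action M \<phi>" and "p \<in> M" and "\<omega> \<in> isotropy \<phi> p" and "x \<in> orbit \<phi> p"
  shows "\<phi> \<omega> x = x"
proof -
  obtain \<eta> where x: "x = \<phi> \<eta> p"
    using assms(4) by (auto simp: orbit_def)
  have act: "\<phi> (\<alpha> + \<beta>) p = \<phi> \<alpha> (\<phi> \<beta> p)" for \<alpha> \<beta>
    using assms(1,2) unfolding R2_action_def by blast
  have "\<phi> \<omega> x = \<phi> (\<omega> + \<eta>) p"
    by (simp add: x act)
  also have "\<dots> = \<phi> \<eta> (\<phi> \<omega> p)"
    by (metis act add.commute)
  also have "\<dots> = x"
    using assms(3) by (simp add: x isotropy_def)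
  finally show ?thesis .
qed

lemma isotropy_subset_of_dense_orbit:
  assumes "closed M" and "R2_action M \<phi>" and "dense_orbit M \<phi> p" and "q \<in> M"
  shows "isotropy \<phi> p \<subseteq> isotropy \<phi> q"
proof
  fix \<omega> assume \<omega>: "\<omega> \<in> isotropy \<phi> p"
  have "p \<in> M" and dense: "M \<subseteq> closure (orbit \<phi> p)"
    using assms(3) by (auto simp: dense_orbit_def)
  moreover have "orbit \<phi> p \<subseteq> M"
    using assms(2) \<open>p \<in> M\<close> by (auto simp: orbit_def R2_action_def)
  ultimately have "orbit \<phi> p \<subseteq> {x \<in> M. \<phi> \<omega> x = x}"
    using isotropy_fixes_orbit[OF assms(2) \<open>p \<in> M\<close> \<omega>] by blast
  then have "closure (orbit \<phi> p) \<subseteq> {x \<in> M. \<phi> \<omega> x = x}"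
    using closed_fixed_points[OF assms(1,2)] by (rule closure_minimal)
  then show "\<omega> \<in> isotropy \<phi> q"
    using dense assms(4) by (auto simp: isotropy_def)
qed

theorem mainTheorem3:
  fixes M :: "'a::euclidean_space set" and \<phi> :: "real \<times> real \<Rightarrow> 'a \<Rightarrow> 'a"
  assumes "closed_manifold M" and "A1_action M \<phi>"
    and "dense_orbit M \<phi> p" and "dense_orbit M \<phi> q"
  shows "isotropy \<phi> p = isotropy \<phi> q \<and>
         orbit_topology \<phi> p homeomorphic_space orbit_topology \<phi> q"
proof -
  have "closed M"
    using assms(1) by (simp add: closed_manifold_def compact_imp_closed)
  moreover have act: "R2_action M \<phi>"
    using assms(2) by (simp add: A1_action_def)
  moreover have "p \<in> M" and "q \<in> M"
    using assms(3,4) by (auto simp: dense_orbit_def)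
  ultimately have iso: "isotropy \<phi> p = isotropy \<phi> q"
    using isotropy_subset_of_dense_orbit assms(3,4) by blast
  then have "\<phi> \<omega> p = \<phi> \<eta> p \<longleftrightarrow> \<phi> \<omega> q = \<phi> \<eta> q" for \<omega> \<eta>
    by (simp add: R2_action_eq_iff_diff_isotropy[OF act] \<open>p \<in> M\<close> \<open>q \<in> M\<close>)
  then show ?thesis
    using iso homeomorphic_orbit_topology by metis
qed

end
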